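(* Let $R,C>0$, $\kappa\ge1>\overline\lambda>\underline\lambda>0$ and $\alpha\in(0,1)$. Then there exist $\xi_0>0$ and $\overline\kappa>1$ such that every infinite sequence $\{h_j\}_{j=1}^\infty$ satisfying, for all $j$: (H0) $h_j:B_R\to h_j(B_R)$ is a $\mathcal{C}^{1+\alpha}$ diffeomorphism with $h_j(0)=0$; (H1) $\|h_j\|_{\mathcal{C}^{1+\alpha}}<C$; (H2) $\underline\lambda<m(D_yh_j)\le\|D_yh_j\|<\overline\lambda$ for all $y\in B_R$; (H3) $D_0h^j$ is $\kappa$-conformal — is $\overline\kappa$-conformal at every point of $B_{\xi_0}$, i.e. $D_xh^n$ is $\overline\kappa$-conformal for all $x\in B_{\xi_0}$ and all $n\in\mathbb{N}$.
   Context: $B_r$ is the open Euclidean ball about $0$ in $\mathbb{R}^d$; $h^n=h_n\circ\cdots\circ h_1$; $m(D)=\inf_{|v|=1}|Dv|$; $D$ is $\kappa$-conformal if $\|D\|\,\|D^{-1}\|\le\kappa$; $\|h\|_{\mathcal{C}^{1+\alpha}}=\|h\|_{\mathcal{C}^1}+\sup\{\|D_xh-D_yh\|/|x-y|^\alpha:0<|x-y|<1\}$. *)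

theory Defs
  imports "HOL-Analysis.Analysis"
begin

definition Dh :: "('a::euclidean_space \<Rightarrow> 'a) \<Rightarrow> 'a \<Rightarrow> 'a \<Rightarrow>\<^sub>L 'a" where
  "Dh f x = Blinfun (frechet_derivative f (at x))"

definition mconorm :: "('a::euclidean_space \<Rightarrow>\<^sub>L 'a) \<Rightarrow> real" where
  "mconorm L = Inf {norm (blinfun_apply L v) | v. norm v = 1}"

definition conformal :: "real \<Rightarrow> ('a::euclidean_space \<Rightarrow>\<^sub>L 'a) \<Rightarrow> bool" where
  "conformal \<kappa> L \<longleftrightarrow> (\<exists>Li. L o\<^sub>L Li = id_blinfun \<and> Li o\<^sub>L L = id_blinfun \<and> norm L * norm Li \<le> \<kappa>)"

text \<open>h^n = h_n o ... o h_1 (sequence indexed from 1; h^0 = id).\<close>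
fun hcomp :: "(nat \<Rightarrow> 'a \<Rightarrow> 'a) \<Rightarrow> nat \<Rightarrow> 'a \<Rightarrow> 'a" where
  "hcomp h 0 = id"
| "hcomp h (Suc n) = h (Suc n) \<circ> hcomp h n"

text \<open>C^{1+alpha} norm on B_R: sup|h| + sup||Dh|| + alpha-Hoelder seminorm of Dh
  (over pairs at distance in (0,1)); extended-real valued so unboundedness gives infinity.\<close>
definition C1a_norm :: "real \<Rightarrow> real \<Rightarrow> ('a::euclidean_space \<Rightarrow> 'a) \<Rightarrow> ereal" where
  "C1a_norm R \<alpha> f =
     (SUP x\<in>ball 0 R. ereal (norm (f x)))
   + (SUP x\<in>ball 0 R. ereal (norm (Dh f x)))
   + (SUP p\<in>{(x,y). x \<in> ball 0 R \<and> y \<in> ball 0 R \<and> 0 < dist x y \<and> dist x y < 1}.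
        ereal (norm (Dh f (fst p) - Dh f (snd p)) / (dist (fst p) (snd p)) powr \<alpha>))"

definition C1a_on :: "real \<Rightarrow> 'a set \<Rightarrow> ('a::euclidean_space \<Rightarrow> 'a) \<Rightarrow> bool" where
  "C1a_on \<alpha> U f \<longleftrightarrow>
     (\<forall>x\<in>U. f differentiable (at x)) \<and> continuous_on U (Dh f) \<and>
     (\<exists>K. \<forall>x\<in>U. \<forall>y\<in>U. 0 < dist x y \<and> dist x y < 1 \<longrightarrow>
           norm (Dh f x - Dh f y) \<le> K * dist x y powr \<alpha>)"

definition C1a_diffeo :: "real \<Rightarrow> real \<Rightarrow> ('a::euclidean_space \<Rightarrow> 'a) \<Rightarrow> bool" where
  "C1a_diffeo R \<alpha> f \<longleftrightarrow>
     C1a_on \<alpha> (ball 0 R) f \<and> inj_on f (ball 0 R) \<and> open (f ` ball 0 R) \<and>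
     (\<exists>g. (\<forall>x\<in>ball 0 R. g (f x) = x) \<and> C1a_on \<alpha> (f ` ball 0 R) g)"

end

theory Submission
  imports Defs
begin

(* Write D_x h^n = D_0 h^n o W_n.  By the chain rule W_(k+1) = (I + G_k) W_k with
   G_k = (D_0 h^(k+1))^-1 (D_(h^k x) h_(k+1) - D_0 h_(k+1)) D_0 h^k.  The lower bound m(D_0 h_(k+1)) > lam_lo
   and the kappa-conformality of D_0 h^(k+1) give |G_k| <= kappa/lam_lo |D_(h^k x) h_(k+1) - D_0 h_(k+1)|, and
   by Hoelder continuity of the derivatives and the contraction |h^k x| <= lam_up^k |x| this is bounded by
   a geometric series C kappa/lam_lo (lam_up^alpha)^k |x|^alpha.  For small |x| the total is at most 1/4, so
   W_n stays within 1/2 of the identity, is 3-conformal, and D_x h^n is (3 kappa)-conformal. *)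

lemma Dh_apply: "f differentiable at x \<Longrightarrow> blinfun_apply (Dh f x) = frechet_derivative f (at x)"
  unfolding Dh_def
  by (rule bounded_linear_Blinfun_apply) (meson frechet_derivative_works has_derivative_bounded_linear)

lemma Dh_compose:
  assumes "g differentiable at x" "f differentiable at (g x)"
  shows "Dh (f \<circ> g) x = Dh f (g x) o\<^sub>L Dh g x"
proof -
  have "(f \<circ> g) differentiable at x" using assms differentiable_chain_at by blast
  then show ?thesis
    by (intro blinfun_eqI) (simp add: Dh_apply assms frechet_derivative_compose)
qed

lemma Dh_id: "Dh id x = id_blinfun"
proof -
  have "id differentiable at x" unfolding id_def by simp
  then show ?thesis by (intro blinfun_eqI) (simp add: Dh_apply)
qed

lemma mconorm_mult_norm_le: "mconorm L * norm v \<le> norm (blinfun_apply L v)"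
proof (cases "v = 0")
  case True then show ?thesis by simp
next
  case False
  let ?u = "v /\<^sub>R norm v"
  have "mconorm L \<le> norm (blinfun_apply L ?u)"
    unfolding mconorm_def
    by (rule cInf_lower) (use False in \<open>auto intro!: bdd_belowI[where m=0]\<close>)
  also have "\<dots> = norm (blinfun_apply L v) / norm v"
    using False by (simp add: blinfun.scaleR_right divide_inverse_commute)
  finally show ?thesis using False by (simp add: field_simps)
qed

lemma conformalI_bounds:
  fixes L :: "'a::euclidean_space \<Rightarrow>\<^sub>L 'a"
  assumes lower: "\<And>v. c * norm v \<le> norm (blinfun_apply L v)" and "c > 0" and upper: "norm L \<le> \<kappa> * c"
  shows "conformal \<kappa> L"
proof -
  have lin: "linear (blinfun_apply L)" by (simp add: blinfun.bounded_linear_right bounded_linear.linear)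
  have "inj (blinfun_apply L)"
  proof (rule linear_injective_0[OF lin, THEN iffD2], intro allI impI)
    fix v assume "blinfun_apply L v = 0"
    with lower[of v] \<open>c > 0\<close> show "v = 0" by (simp add: mult_le_0_iff)
  qed
  then obtain g where g: "linear g" "g \<circ> blinfun_apply L = id" and "surj (blinfun_apply L)"
    using linear_injective_left_inverse[OF lin] linear_injective_imp_surjective[OF lin] by blast
  then have gL: "g (blinfun_apply L v) = v" and Lg: "blinfun_apply L (g y) = y" for v y
    by (metis comp_apply id_apply, metis comp_apply id_apply surjD)
  define Li where "Li = Blinfun g"
  have Li: "blinfun_apply Li = g"
    unfolding Li_def using g(1) bounded_linear_Blinfun_apply linear_conv_bounded_linear by blast
  have "norm Li \<le> 1 / c"
  proof (rule norm_blinfun_bound)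
    fix y
    have "c * norm (g y) \<le> norm y" using lower[of "g y"] Lg by simp
    then show "norm (blinfun_apply Li y) \<le> 1 / c * norm y" using \<open>c > 0\<close> by (simp add: Li field_simps)
  qed (use \<open>c > 0\<close> in simp)
  then have "norm L * norm Li \<le> (\<kappa> * c) * (1 / c)"
    by (intro mult_mono upper) (use order_trans[OF norm_ge_zero upper] in auto)
  moreover have "L o\<^sub>L Li = id_blinfun" "Li o\<^sub>L L = id_blinfun"
    by (auto intro!: blinfun_eqI simp: Li Lg gL)
  ultimately show ?thesis unfolding conformal_def using \<open>c > 0\<close> by auto
qed

lemma conformal_id: "1 \<le> \<kappa> \<Longrightarrow> conformal \<kappa> (id_blinfun :: 'a::euclidean_space \<Rightarrow>\<^sub>L 'a)"
  by (rule conformalI_bounds[where c = 1]) auto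

lemma conformal_compose:
  assumes "conformal a L" "conformal b M"
  shows "conformal (a * b) (L o\<^sub>L M)"
proof -
  obtain Li Mi where L: "L o\<^sub>L Li = id_blinfun" "Li o\<^sub>L L = id_blinfun" "norm L * norm Li \<le> a"
    and M: "M o\<^sub>L Mi = id_blinfun" "Mi o\<^sub>L M = id_blinfun" "norm M * norm Mi \<le> b"
    using assms unfolding conformal_def by blast
  have "blinfun_apply L (blinfun_apply Li y) = y" "blinfun_apply Li (blinfun_apply L y) = y"
    "blinfun_apply M (blinfun_apply Mi y) = y" "blinfun_apply Mi (blinfun_apply M y) = y" for y
    using L M by (metis blinfun_apply_blinfun_compose blinfun_apply_id_blinfun)+
  then have "(L o\<^sub>L M) o\<^sub>L (Mi o\<^sub>L Li) = id_blinfun" "(Mi o\<^sub>L Li) o\<^sub>L (L o\<^sub>L M) = id_blinfun"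
    by (auto intro!: blinfun_eqI)
  moreover have "norm (L o\<^sub>L M) * norm (Mi o\<^sub>L Li) \<le> (norm L * norm M) * (norm Mi * norm Li)"
    by (intro mult_mono norm_blinfun_compose) auto
  moreover have "\<dots> \<le> a * b"
    using mult_mono[OF L(3) M(3)] order_trans[OF _ L(3)] by (simp add: mult_ac)
  ultimately show ?thesis unfolding conformal_def by (meson order_trans)
qed

lemma conformal_near_id:
  fixes W :: "'a::euclidean_space \<Rightarrow>\<^sub>L 'a"
  assumes near: "\<And>u. norm (blinfun_apply W u - u) \<le> norm u / 2"
  shows "conformal 3 W"
proof (rule conformalI_bounds[where c = "1/2"])
  fix v
  show "1/2 * norm v \<le> norm (blinfun_apply W v)"
    using near[of v] norm_triangle_ineq3[of v "blinfun_apply W v"] by (simp add: norm_minus_commute)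
next
  show "norm W \<le> 3 * (1/2)"
  proof (rule norm_blinfun_bound)
    fix u
    show "norm (blinfun_apply W u) \<le> 3 * (1/2) * norm u"
      using near[of u] norm_triangle_ineq2[of "blinfun_apply W u" u] by simp
  qed simp
qed simp

lemma norm_diff_perturbed_orbit:
  fixes w :: "nat \<Rightarrow> 'a::real_normed_vector"
  assumes step: "\<And>k. k < n \<Longrightarrow> norm (w (Suc k) - w k) \<le> g k * norm (w k)"
    and g: "\<And>k. k < n \<Longrightarrow> 0 \<le> g k" and small: "(\<Sum>k<n. g k) \<le> 1/2"
  shows "norm (w n - w 0) \<le> 2 * (\<Sum>k<n. g k) * norm (w 0)"
proof -
  have "norm (w k - w 0) \<le> 2 * (\<Sum>j<k. g j) * norm (w 0)" if "k \<le> n" for k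
    using that
  proof (induction k)
    case (Suc k)
    have "(\<Sum>j<k. g j) \<le> (\<Sum>j<n. g j)"
      using Suc.prems g by (intro sum_mono2) auto
    then have "2 * (\<Sum>j<k. g j) * norm (w 0) \<le> norm (w 0)"
      using small mult_right_mono[of "2 * (\<Sum>j<k. g j)" 1 "norm (w 0)"] by simp
    then have "norm (w k) \<le> 2 * norm (w 0)"
      using Suc norm_triangle_ineq2[of "w k" "w 0"] by simp
    then have "norm (w (Suc k) - w k) \<le> g k * (2 * norm (w 0))"
      using Suc.prems step[of k] g[of k] by (meson Suc_le_lessD mult_left_mono order_trans)
    then show ?case
      using Suc norm_triangle_ineq[of "w (Suc k) - w k" "w k - w 0"] by (simp add: algebra_simps)
  qed simp
  then show ?thesis by simp
qed

lemma mult_norm_le_norm_compose: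
  assumes "\<And>v. lam * norm v \<le> norm (blinfun_apply A v)" and "0 < lam"
  shows "lam * norm M \<le> norm (A o\<^sub>L M)"
proof -
  have "norm M \<le> norm (A o\<^sub>L M) / lam"
  proof (rule norm_blinfun_bound)
    fix v
    have "lam * norm (blinfun_apply M v) \<le> norm (A o\<^sub>L M) * norm v"
      using assms(1)[of "blinfun_apply M v"] norm_blinfun[of "A o\<^sub>L M" v] by simp
    then show "norm (blinfun_apply M v) \<le> norm (A o\<^sub>L M) / lam * norm v"
      using \<open>0 < lam\<close> by (simp add: field_simps)
  qed (use \<open>0 < lam\<close> in simp)
  then show ?thesis using \<open>0 < lam\<close> by (simp add: field_simps)
qed

lemma norm_conjugate_le:
  assumes "\<And>v. lam * norm v \<le> norm (blinfun_apply A v)" and "0 < lam"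
    and "norm (A o\<^sub>L Q) * norm Qi \<le> \<kappa>"
  shows "norm (Qi o\<^sub>L D o\<^sub>L Q) \<le> \<kappa> / lam * norm D"
proof -
  have "lam * (norm Qi * norm Q) \<le> \<kappa>"
    using mult_right_mono[OF mult_norm_le_norm_compose[OF assms(1,2)], of "norm Qi" Q] assms(3)
    by (simp add: mult_ac)
  then have "norm Qi * norm Q \<le> \<kappa> / lam" using \<open>0 < lam\<close> by (simp add: field_simps)
  then have "norm Qi * norm D * norm Q \<le> \<kappa> / lam * norm D"
    by (metis mult.commute mult.left_commute mult_right_mono norm_ge_zero)
  moreover have "norm (Qi o\<^sub>L D o\<^sub>L Q) \<le> norm Qi * norm D * norm Q"
    by (meson norm_blinfun_compose mult_right_mono norm_ge_zero order_trans)
  ultimately show ?thesis by linarith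
qed

lemma conformal_perturbed_product:
  fixes A B P Q :: "nat \<Rightarrow> 'a::euclidean_space \<Rightarrow>\<^sub>L 'a"
  assumes Q0: "Q 0 = id_blinfun" and Q_Suc: "\<And>k. Q (Suc k) = A (Suc k) o\<^sub>L Q k"
    and P0: "P 0 = id_blinfun" and P_Suc: "\<And>k. P (Suc k) = B (Suc k) o\<^sub>L P k"
    and Q_conformal: "\<And>k. conformal \<kappa> (Q k)"
    and A_lower: "\<And>k v. lam * norm v \<le> norm (blinfun_apply (A (Suc k)) v)" and "0 < lam"
    and small: "\<kappa> * (\<Sum>k<n. norm (B (Suc k) - A (Suc k))) \<le> lam / 4"
  shows "conformal (\<kappa> * 3) (P n)"
proof -
  obtain Qi where Qi: "\<And>k. Q k o\<^sub>L Qi k = id_blinfun" "\<And>k. Qi k o\<^sub>L Q k = id_blinfun"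
    "\<And>k. norm (Q k) * norm (Qi k) \<le> \<kappa>"
    using Q_conformal unfolding conformal_def by metis
  have Q_Qi: "blinfun_apply (Q k) (blinfun_apply (Qi k) y) = y"
    and Qi_Q: "blinfun_apply (Qi k) (blinfun_apply (Q k) y) = y" for k y
    using Qi by (metis blinfun_apply_blinfun_compose blinfun_apply_id_blinfun)+
  define W where "W k = Qi k o\<^sub>L P k" for k
  define G where "G k = Qi (Suc k) o\<^sub>L (B (Suc k) - A (Suc k)) o\<^sub>L Q k" for k
  have P_eq: "P k = Q k o\<^sub>L W k" for k
    by (auto intro!: blinfun_eqI simp: W_def Q_Qi)
  have W0: "blinfun_apply (W 0) u = u" for u
    using Qi_Q[of 0 u] by (simp add: W_def Q0 P0)
  have W_Suc: "blinfun_apply (W (Suc k)) u = blinfun_apply (W k) u + blinfun_apply (G k) (blinfun_apply (W k) u)"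
    for k u
  proof -
    let ?w = "blinfun_apply (W k) u"
    have "blinfun_apply (W (Suc k)) u
        = blinfun_apply (Qi (Suc k)) (blinfun_apply (B (Suc k)) (blinfun_apply (Q k) ?w))"
      by (simp add: W_def P_Suc Q_Qi)
    also have "\<dots> = blinfun_apply (Qi (Suc k)) (blinfun_apply (A (Suc k)) (blinfun_apply (Q k) ?w))
        + blinfun_apply (G k) ?w"
      by (simp add: G_def blinfun.diff_left blinfun.diff_right)
    also have "blinfun_apply (Qi (Suc k)) (blinfun_apply (A (Suc k)) (blinfun_apply (Q k) ?w)) = ?w"
      using Qi_Q[of "Suc k" ?w] by (simp add: Q_Suc)
    finally show ?thesis .
  qed
  have G_bound: "norm (G k) \<le> \<kappa> / lam * norm (B (Suc k) - A (Suc k))" for k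
    unfolding G_def using Qi(3)[of "Suc k"]
    by (intro norm_conjugate_le[OF A_lower \<open>0 < lam\<close>]) (simp add: Q_Suc mult.commute)
  have G_sum: "(\<Sum>k<n. norm (G k)) \<le> 1/4"
  proof -
    have "(\<Sum>k<n. norm (G k)) \<le> \<kappa> / lam * (\<Sum>k<n. norm (B (Suc k) - A (Suc k)))"
      unfolding sum_distrib_left by (rule sum_mono[OF G_bound])
    also have "\<dots> \<le> 1/4" using small \<open>0 < lam\<close> by (simp add: field_simps)
    finally show ?thesis .
  qed
  have "norm (blinfun_apply (W n) u - u) \<le> norm u / 2" for u
  proof -
    have "norm (blinfun_apply (W n) u - blinfun_apply (W 0) u) \<le> 2 * (\<Sum>k<n. norm (G k)) * norm (blinfun_apply (W 0) u)"
      by (rule norm_diff_perturbed_orbit) (use G_sum in \<open>auto simp: W_Suc norm_blinfun\<close>)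
    then show ?thesis using G_sum W0[of u] mult_right_mono[OF G_sum, of "norm u"] by simp
  qed
  then have "conformal 3 (W n)" by (rule conformal_near_id)
  then show ?thesis unfolding P_eq by (rule conformal_compose[OF Q_conformal])
qed

lemma norm_le_of_Dh_bound:
  fixes f :: "'a::euclidean_space \<Rightarrow> 'a"
  assumes "\<And>y. y \<in> ball 0 R \<Longrightarrow> f differentiable at y"
    and "\<And>y. y \<in> ball 0 R \<Longrightarrow> norm (Dh f y) \<le> L" and "f 0 = 0" and "z \<in> ball 0 R"
  shows "norm (f z) \<le> L * norm z"
proof -
  have "0 \<in> ball (0::'a) R" using \<open>z \<in> ball 0 R\<close> by (auto intro: le_less_trans[OF norm_ge_zero])
  have "norm (f z - f 0) \<le> L * norm (z - 0)"
  proof (rule differentiable_bound[where f' = "\<lambda>y. frechet_derivative f (at y)"])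
    fix y :: 'a assume y: "y \<in> ball 0 R"
    show "(f has_derivative frechet_derivative f (at y)) (at y within ball 0 R)"
      using assms(1)[OF y] frechet_derivative_works has_derivative_at_withinI by blast
    show "onorm (frechet_derivative f (at y)) \<le> L"
      using assms(2)[OF y] by (simp add: norm_blinfun.rep_eq Dh_apply assms(1)[OF y])
  qed (use assms \<open>0 \<in> ball 0 R\<close> in auto)
  then show ?thesis using \<open>f 0 = 0\<close> by simp
qed

lemma hcomp_orbit:
  fixes h :: "nat \<Rightarrow> 'a::euclidean_space \<Rightarrow> 'a"
  assumes diff: "\<And>j y. j \<ge> 1 \<Longrightarrow> y \<in> ball 0 R \<Longrightarrow> h j differentiable at y"
    and Dh_le: "\<And>j y. j \<ge> 1 \<Longrightarrow> y \<in> ball 0 R \<Longrightarrow> norm (Dh (h j) y) \<le> L"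
    and fixed: "\<And>j. j \<ge> 1 \<Longrightarrow> h j 0 = 0"
    and "0 \<le> L" "L \<le> 1" and z: "z \<in> ball 0 R"
  shows "norm (hcomp h k z) \<le> L^k * norm z \<and> hcomp h k z \<in> ball 0 R \<and> hcomp h k differentiable at z"
proof (induction k)
  case 0
  have "id differentiable at z" unfolding id_def by simp
  then show ?case using z by simp
next
  case (Suc k)
  then have IH: "norm (hcomp h k z) \<le> L^k * norm z" "hcomp h k z \<in> ball 0 R" "hcomp h k differentiable at z"
    by auto
  have "norm (h (Suc k) (hcomp h k z)) \<le> L * norm (hcomp h k z)"
    by (rule norm_le_of_Dh_bound[where R = R]) (use diff Dh_le fixed IH(2) in auto)
  also have "\<dots> \<le> L^Suc k * norm z" using mult_left_mono[OF IH(1) \<open>0 \<le> L\<close>] by (simp add: mult.assoc)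
  finally have le: "norm (hcomp h (Suc k) z) \<le> L^Suc k * norm z" by simp
  also have "\<dots> \<le> norm z" using \<open>0 \<le> L\<close> \<open>L \<le> 1\<close> by (intro mult_left_le_one_le power_le_one) auto
  finally have "hcomp h (Suc k) z \<in> ball 0 R" using z by auto
  moreover have "hcomp h (Suc k) differentiable at z"
    using differentiable_chain_at[OF IH(3) diff[OF _ IH(2), of "Suc k"]] by simp
  ultimately show ?case using le by (simp del: comp_apply)
qed

lemma C1a_norm_Dh_holder:
  fixes f :: "'a::euclidean_space \<Rightarrow> 'a"
  assumes N: "C1a_norm R \<alpha> f < ereal C" and x: "x \<in> ball 0 R" and y: "y \<in> ball 0 R"
    and "dist x y < 1" and "0 < \<alpha>"
  shows "norm (Dh f x - Dh f y) \<le> C * dist x y powr \<alpha>"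
proof (cases "x = y")
  case True
  then show ?thesis using \<open>0 < \<alpha>\<close> by simp
next
  case False
  define a where "a = (SUP x\<in>ball 0 R. ereal (norm (f x)))"
  define b where "b = (SUP x\<in>ball 0 R. ereal (norm (Dh f x)))"
  define c where "c = (SUP p\<in>{(x,y). x \<in> ball 0 R \<and> y \<in> ball 0 R \<and> 0 < dist x y \<and> dist x y < 1}.
        ereal (norm (Dh f (fst p) - Dh f (snd p)) / (dist (fst p) (snd p)) powr \<alpha>))"
  have "0 \<le> a" "0 \<le> b" unfolding a_def b_def by (rule SUP_upper2[OF x], simp)+
  have "ereal (norm (Dh f x - Dh f y) / (dist x y) powr \<alpha>) \<le> c"
    unfolding c_def by (rule SUP_upper2[where i="(x,y)"]) (use x y False \<open>dist x y < 1\<close> in auto)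
  also have "c \<le> a + b + c" using \<open>0 \<le> a\<close> \<open>0 \<le> b\<close> by (simp add: add_increasing)
  also have "\<dots> < ereal C" using N unfolding C1a_norm_def a_def b_def c_def .
  finally show ?thesis using False by (simp add: divide_less_eq)
qed

lemma power_powr: "(x ^ k) powr a = (x powr a) ^ k" for x :: real
  by (induction k) (auto simp: powr_mult)

lemma sum_power_le_geometric: "0 \<le> r \<Longrightarrow> r < 1 \<Longrightarrow> (\<Sum>k<n. r ^ k) \<le> 1 / (1 - r)" for r :: real
  by (simp add: sum_gp_strict divide_right_mono)

lemma conformal_Dh_hcomp:
  fixes h :: "nat \<Rightarrow> 'a::euclidean_space \<Rightarrow> 'a"
  assumes diff: "\<And>j y. j \<ge> 1 \<Longrightarrow> y \<in> ball 0 R \<Longrightarrow> h j differentiable at y"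
    and Dh_le: "\<And>j y. j \<ge> 1 \<Longrightarrow> y \<in> ball 0 R \<Longrightarrow> norm (Dh (h j) y) \<le> L"
    and fixed: "\<And>j. j \<ge> 1 \<Longrightarrow> h j 0 = 0"
    and Dh_lower: "\<And>j v. j \<ge> 1 \<Longrightarrow> lam * norm v \<le> norm (blinfun_apply (Dh (h j) 0) v)"
    and holder: "\<And>j y. j \<ge> 1 \<Longrightarrow> y \<in> ball 0 R \<Longrightarrow> norm y < 1 \<Longrightarrow>
                   norm (Dh (h j) y - Dh (h j) 0) \<le> C * norm y powr \<alpha>"
    and conformal_at_0: "\<And>j. j \<ge> 1 \<Longrightarrow> conformal \<kappa> (Dh (hcomp h j) 0)"
    and "1 \<le> \<kappa>" "0 < lam" "0 \<le> L" "L < 1" "0 < \<alpha>" "0 \<le> C"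
    and x: "x \<in> ball 0 R" "norm x < 1"
    and small: "\<kappa> * C * norm x powr \<alpha> \<le> lam * (1 - L powr \<alpha>) / 4"
  shows "conformal (\<kappa> * 3) (Dh (hcomp h n) x)"
proof -
  define r where "r = L powr \<alpha>"
  have "0 \<le> r" "r < 1"
    unfolding r_def using powr_less_mono2[of \<alpha> L 1] \<open>0 < \<alpha>\<close> \<open>0 \<le> L\<close> \<open>L < 1\<close> by auto
  have "(0::'a) \<in> ball 0 R" using x by (auto intro: le_less_trans[OF norm_ge_zero])
  have orbit: "norm (hcomp h k z) \<le> L^k * norm z \<and> hcomp h k z \<in> ball 0 R \<and> hcomp h k differentiable at z"
    if "z \<in> ball 0 R" for z k
    by (rule hcomp_orbit) (use diff Dh_le fixed \<open>0 \<le> L\<close> \<open>L < 1\<close> that in auto)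
  have orbit_0: "hcomp h k 0 = 0" "hcomp h k differentiable at 0" for k
    using orbit[OF \<open>0 \<in> ball 0 R\<close>, of k] by auto
  have orbit_x: "norm (hcomp h k x) \<le> L^k * norm x" "hcomp h k x \<in> ball 0 R"
    "hcomp h k differentiable at x" for k
    using orbit[OF x(1), of k] by auto
  have defect: "norm (Dh (h (Suc k)) (hcomp h k x) - Dh (h (Suc k)) 0) \<le> C * norm x powr \<alpha> * r ^ k" for k
  proof -
    have "L^k * norm x \<le> norm x" using \<open>0 \<le> L\<close> \<open>L < 1\<close> by (intro mult_left_le_one_le power_le_one) auto
    then have "norm (Dh (h (Suc k)) (hcomp h k x) - Dh (h (Suc k)) 0) \<le> C * norm (hcomp h k x) powr \<alpha>"
      using holder[of "Suc k", OF _ orbit_x(2)] orbit_x(1)[of k] x(2) by simp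
    also have "\<dots> \<le> C * (L^k * norm x) powr \<alpha>"
      using orbit_x(1) \<open>0 < \<alpha>\<close> \<open>0 \<le> C\<close> by (intro mult_left_mono powr_mono2) auto
    finally show ?thesis by (simp add: powr_mult power_powr r_def mult_ac)
  qed
  show ?thesis
  proof (rule conformal_perturbed_product[where A = "\<lambda>k. Dh (h k) 0" and Q = "\<lambda>k. Dh (hcomp h k) 0"
        and B = "\<lambda>k. Dh (h k) (hcomp h (k - 1) x)" and lam = lam])
    fix k
    show "Dh (hcomp h (Suc k)) 0 = Dh (h (Suc k)) 0 o\<^sub>L Dh (hcomp h k) 0"
      using Dh_compose[OF orbit_0(2) diff] orbit_0(1) \<open>0 \<in> ball 0 R\<close> by simp
    show "Dh (hcomp h (Suc k)) x = Dh (h (Suc k)) (hcomp h (Suc k - 1) x) o\<^sub>L Dh (hcomp h k) x"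
      using Dh_compose[OF orbit_x(3) diff] orbit_x(2) by simp
    show "conformal \<kappa> (Dh (hcomp h k) 0)"
      using conformal_at_0[of k] conformal_id[OF \<open>1 \<le> \<kappa>\<close>] by (cases k) (auto simp: Dh_id)
  next
    have "\<kappa> * (\<Sum>k<n. norm (Dh (h (Suc k)) (hcomp h k x) - Dh (h (Suc k)) 0))
        \<le> \<kappa> * (C * norm x powr \<alpha> * (\<Sum>k<n. r ^ k))"
      unfolding sum_distrib_left using \<open>1 \<le> \<kappa>\<close> by (intro mult_left_mono sum_mono defect) auto
    also have "\<dots> = \<kappa> * C * norm x powr \<alpha> * (\<Sum>k<n. r ^ k)" by (simp add: mult_ac)
    also have "\<dots> \<le> \<kappa> * C * norm x powr \<alpha> * (1 / (1 - r))"
      using \<open>1 \<le> \<kappa>\<close> \<open>0 \<le> C\<close>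
      by (intro mult_left_mono sum_power_le_geometric \<open>0 \<le> r\<close> \<open>r < 1\<close>) auto
    also have "\<dots> \<le> lam / 4" using small \<open>r < 1\<close> by (simp add: r_def field_simps)
    finally show "\<kappa> * (\<Sum>k<n. norm (Dh (h (Suc k)) (hcomp h (Suc k - 1) x) - Dh (h (Suc k)) 0)) \<le> lam / 4"
      by simp
  qed (use Dh_lower \<open>0 < lam\<close> in \<open>auto simp: Dh_id Dh_id[unfolded id_def]\<close>)
qed

theorem mainTheorem7:
  fixes R C \<kappa> lam_up lam_lo \<alpha> :: real
  assumes "R > 0" and "C > 0" and "\<kappa> \<ge> 1" and "1 > lam_up" and "lam_up > lam_lo" and "lam_lo > 0"
    and "0 < \<alpha>" and "\<alpha> < 1"
  shows "\<exists>xi0 > 0. \<exists>kappa_bar > 1. \<forall>h :: nat \<Rightarrow> 'a::euclidean_space \<Rightarrow> 'a.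
           (\<forall>j\<ge>1.
              C1a_diffeo R \<alpha> (h j) \<and> h j 0 = 0
            \<and> C1a_norm R \<alpha> (h j) < ereal C
            \<and> (\<forall>y\<in>ball 0 R. lam_lo < mconorm (Dh (h j) y) \<and> mconorm (Dh (h j) y) \<le> norm (Dh (h j) y)
                                \<and> norm (Dh (h j) y) < lam_up)
            \<and> conformal \<kappa> (Dh (hcomp h j) 0))
           \<longrightarrow> (\<forall>n\<ge>1. \<forall>x\<in>ball 0 xi0. conformal kappa_bar (Dh (hcomp h n) x))"
proof -
  define \<epsilon> where "\<epsilon> = lam_lo * (1 - lam_up powr \<alpha>) / (4 * \<kappa> * C)"
  define xi0 where "xi0 = min (min R 1) (\<epsilon> powr (1 / \<alpha>))"
  have "lam_up powr \<alpha> < 1" using powr_less_mono2[of \<alpha> lam_up 1] assms by simp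
  then have "\<epsilon> > 0" unfolding \<epsilon>_def using assms by simp
  then have "xi0 > 0" unfolding xi0_def using assms by simp
  have small: "\<kappa> * C * norm x powr \<alpha> \<le> lam_lo * (1 - lam_up powr \<alpha>) / 4" if "norm x < xi0" for x :: 'a
  proof -
    have "norm x powr \<alpha> \<le> (\<epsilon> powr (1 / \<alpha>)) powr \<alpha>"
      using that \<open>0 < \<alpha>\<close> by (intro powr_mono2) (auto simp: xi0_def)
    then have "norm x powr \<alpha> \<le> \<epsilon>" using \<open>0 < \<alpha>\<close> \<open>\<epsilon> > 0\<close> by (simp add: powr_powr)
    then show ?thesis using assms unfolding \<epsilon>_def by (simp add: field_simps)
  qed
  show ?thesis
  proof (rule exI[of _ xi0], intro conjI exI[of _ "\<kappa> * 3"] allI impI ballI)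
    fix h :: "nat \<Rightarrow> 'a \<Rightarrow> 'a" and n :: nat and x :: 'a
    assume H: "\<forall>j\<ge>1. C1a_diffeo R \<alpha> (h j) \<and> h j 0 = 0 \<and> C1a_norm R \<alpha> (h j) < ereal C
            \<and> (\<forall>y\<in>ball 0 R. lam_lo < mconorm (Dh (h j) y) \<and> mconorm (Dh (h j) y) \<le> norm (Dh (h j) y)
                                \<and> norm (Dh (h j) y) < lam_up)
            \<and> conformal \<kappa> (Dh (hcomp h j) 0)"
      and "x \<in> ball 0 xi0"
    have "0 \<in> ball (0::'a) R" using assms by simp
    show "conformal (\<kappa> * 3) (Dh (hcomp h n) x)"
    proof (rule conformal_Dh_hcomp[where R = R and L = lam_up and lam = lam_lo and C = C and \<alpha> = \<alpha>])
      fix j :: nat and y :: 'a assume "j \<ge> 1"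
      then show "h j 0 = 0" "conformal \<kappa> (Dh (hcomp h j) 0)" using H by auto
      show "lam_lo * norm y \<le> norm (blinfun_apply (Dh (h j) 0) y)"
        using H \<open>j \<ge> 1\<close> \<open>0 \<in> ball 0 R\<close> mconorm_mult_norm_le[of "Dh (h j) 0" y]
        by (meson less_imp_le mult_right_mono norm_ge_zero order_trans)
      assume "y \<in> ball 0 R"
      then show "h j differentiable at y" "norm (Dh (h j) y) \<le> lam_up"
        using H \<open>j \<ge> 1\<close> unfolding C1a_diffeo_def C1a_on_def by (auto simp: less_imp_le)
      assume "norm y < 1"
      then show "norm (Dh (h j) y - Dh (h j) 0) \<le> C * norm y powr \<alpha>"
        using C1a_norm_Dh_holder[of R \<alpha> "h j" C y 0] H \<open>j \<ge> 1\<close> \<open>y \<in> ball 0 R\<close> \<open>0 \<in> ball 0 R\<close> \<open>0 < \<alpha>\<close>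
        by simp
    qed (use assms small \<open>x \<in> ball 0 xi0\<close> in \<open>auto simp: xi0_def\<close>)
  qed (use assms \<open>xi0 > 0\<close> in auto)
qed

end
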